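(* Let $a,b>0$ with $a\neq2b$, $\eta\in(0,1]$, $T>0$ and $0<\tau\le T$. Let $d_T(t)=\frac1T\Theta(t)\Theta(T-t)$ be the density of a dark count uniformly distributed in the detection time window $[0,T]$, and define the coincidence probability of a photon detection and a dark count $$p_{\mathrm{ph\text{-}dc}}(T,\tau)=\iint_{|t_1-t_2|\le\tau}p_T(t_1)\,d_T(t_2)\,dt_1\,dt_2 .$$ Then $$p_{\mathrm{ph\text{-}dc}}(T,\tau)\frac{p_{\mathrm{det}}(T)}{\eta}=\frac{a}{2b(a-2b)T}\Big[1+2b\tau-e^{-2b\tau}+e^{-2bT}\big(1-2b\tau-e^{2b\tau}\big)\Big]-\frac{2b}{a(a-2b)T}\Big[1+a\tau-e^{-a\tau}+e^{-aT}\big(1-a\tau-e^{a\tau}\big)\Big].$$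
   Context: $\Theta$ is the Heaviside step function. The double-exponential photon state $(a,b)$ is the mixture over emission times $t_0$ with density $p_{\mathrm{em}}(t_0)=ae^{-at_0}\Theta(t_0)$ of pure photons with temporal wave function $\psi_{t_0}(t)=\sqrt{2b}\,e^{-b(t-t_0)}\Theta(t-t_0)$. For a detector of efficiency $\eta$, the detection-time density is $p(t)=\eta\int_0^\infty p_{\mathrm{em}}(t_0)|\psi_{t_0}(t)|^2dt_0$, $p_{\mathrm{det}}(T)=\int_0^Tp(t)\,dt$, and $p_T(t)=\Theta(t)\Theta(T-t)p(t)/p_{\mathrm{det}}(T)$ is the detection-time density conditioned on detection within $[0,T]$. *)

theory Defs
  imports "HOL-Analysis.Analysis"
begin

text \<open>Heaviside step function (the value at 0 is irrelevant for all integrals below).\<close>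
definition heaviside :: "real \<Rightarrow> real" where
  "heaviside x = (if 0 \<le> x then 1 else 0)"

text \<open>Emission-time density of the double-exponential photon state (a,b).\<close>
definition p_em :: "real \<Rightarrow> real \<Rightarrow> real" where
  "p_em a t0 = a * exp (- a * t0) * heaviside t0"

text \<open>Temporal wave function of the pure photon emitted at time t0.\<close>
definition psi :: "real \<Rightarrow> real \<Rightarrow> real \<Rightarrow> real" where
  "psi b t0 t = sqrt (2 * b) * exp (- b * (t - t0)) * heaviside (t - t0)"

definition p_dens :: "real \<Rightarrow> real \<Rightarrow> real \<Rightarrow> real \<Rightarrow> real" where
  "p_dens a b \<eta> t = \<eta> * (LINT t0:{0..}|lborel. p_em a t0 * (psi b t0 t)\<^sup>2)"

definition p_det :: "real \<Rightarrow> real \<Rightarrow> real \<Rightarrow> real \<Rightarrow> real" where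
  "p_det a b \<eta> T = (LINT t:{0..T}|lborel. p_dens a b \<eta> t)"

definition p_cond :: "real \<Rightarrow> real \<Rightarrow> real \<Rightarrow> real \<Rightarrow> real \<Rightarrow> real" where
  "p_cond a b \<eta> T t = heaviside t * heaviside (T - t) * p_dens a b \<eta> t / p_det a b \<eta> T"

definition d_dens :: "real \<Rightarrow> real \<Rightarrow> real" where
  "d_dens T t = (1 / T) * heaviside t * heaviside (T - t)"

definition p_phdc :: "real \<Rightarrow> real \<Rightarrow> real \<Rightarrow> real \<Rightarrow> real \<Rightarrow> real" where
  "p_phdc a b \<eta> T \<tau> =
     (LINT z:{(t1, t2). \<bar>t1 - t2\<bar> \<le> \<tau>}|(lborel \<Otimes>\<^sub>M lborel).
        p_cond a b \<eta> T (fst z) * d_dens T (snd z))"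

end

theory Submission
  imports Defs
begin

(* For t >= 0 the detection density is p(t) = eta * f(t) with
   f(t) = 2ab/(2b-a) (exp(-a t) - exp(-2b t)) > 0, so p_det(T) > 0 and it cancels against the
   normalisation of p_T. Integrating out the dark-count time by Fubini leaves (1/T) times the
   integral over [0,T] of f(t) w(t), where w(t) is the length of the intersection of
   [t - tau, t + tau] with [0,T]. Since w(t) = 2 tau - max 0 (tau - t) - max 0 (t + tau - T),
   only integrals of exp(-c t) times a linear function over subintervals remain, each evaluated
   by the fundamental theorem of calculus. *)

lemma fundamental_theorem_of_calculus_real:
  fixes F f :: "real \<Rightarrow> real"
  assumes "\<alpha> \<le> \<beta>" "\<And>t. \<alpha> \<le> t \<Longrightarrow> t \<le> \<beta> \<Longrightarrow> (F has_real_derivative f t) (at t)"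
  shows "(f has_integral (F \<beta> - F \<alpha>)) {\<alpha>..\<beta>}"
  using assms by (intro fundamental_theorem_of_calculus)
    (auto simp: has_real_derivative_iff_has_vector_derivative[symmetric] intro: has_field_derivative_at_within)

lemma has_integral_exp_neg:
  fixes c :: real
  assumes "c \<noteq> 0" "\<alpha> \<le> \<beta>"
  shows "((\<lambda>t. exp (-c*t)) has_integral (exp (-c*\<alpha>) - exp (-c*\<beta>)) / c) {\<alpha>..\<beta>}"
proof -
  have "((\<lambda>t. exp (-c*t)) has_integral (-exp (-c*\<beta>)/c - -exp (-c*\<alpha>)/c)) {\<alpha>..\<beta>}"
    using assms by (intro fundamental_theorem_of_calculus_real) (auto intro!: derivative_eq_intros)
  then show ?thesis by (simp add: diff_divide_distrib)
qed

lemma has_integral_exp_neg_times_linear: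
  fixes c s :: real
  defines "E \<equiv> \<lambda>t. exp (-c*t) * ((t - s)/c + 1/c^2)"
  assumes "c \<noteq> 0" "\<alpha> \<le> \<beta>"
  shows "((\<lambda>t. exp (-c*t) * (t - s)) has_integral E \<alpha> - E \<beta>) {\<alpha>..\<beta>}"
proof -
  have "((\<lambda>t. exp (-c*t) * (t - s)) has_integral (-E) \<beta> - (-E) \<alpha>) {\<alpha>..\<beta>}"
    using assms unfolding E_def
    by (intro fundamental_theorem_of_calculus_real)
      (auto intro!: derivative_eq_intros simp: field_simps power2_eq_square)
  then show ?thesis by simp
qed

lemma has_integral_exp_neg_ramp_down:
  fixes c \<tau> T :: real
  assumes "c \<noteq> 0" "0 \<le> \<tau>" "\<tau> \<le> T"
  shows "((\<lambda>t. exp (-c*t) * max 0 (\<tau> - t)) has_integral \<tau>/c - (1 - exp (-c*\<tau>))/c^2) {0..T}"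
proof -
  have "((\<lambda>t. - (exp (-c*t) * (t - \<tau>))) has_integral \<tau>/c - (1 - exp (-c*\<tau>))/c^2) {0..\<tau>}"
    by (rule has_integral_eq_rhs[OF has_integral_neg[OF has_integral_exp_neg_times_linear
          [where s = \<tau> and \<alpha> = 0 and \<beta> = \<tau>]]])
      (use assms in \<open>auto simp: field_simps power2_eq_square\<close>)
  then have "((\<lambda>t. exp (-c*t) * max 0 (\<tau> - t)) has_integral \<tau>/c - (1 - exp (-c*\<tau>))/c^2) {0..\<tau>}"
    by (rule has_integral_eq[rotated]) (simp add: algebra_simps)
  moreover have "((\<lambda>t. exp (-c*t) * max 0 (\<tau> - t)) has_integral 0) {\<tau>..T}"
    by (rule has_integral_eq[OF _ has_integral_0]) auto
  ultimately show ?thesis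
    using has_integral_combine[OF assms(2,3)] by fastforce
qed

lemma has_integral_exp_neg_ramp_up:
  fixes c \<tau> T :: real
  assumes "c \<noteq> 0" "0 \<le> \<tau>" "\<tau> \<le> T"
  shows "((\<lambda>t. exp (-c*t) * max 0 (t + \<tau> - T)) has_integral
           exp (-c*T) * (exp (c*\<tau>) - 1 - c*\<tau>)/c^2) {0..T}"
proof -
  have "((\<lambda>t. exp (-c*t) * (t - (T - \<tau>))) has_integral
           exp (-c*T) * (exp (c*\<tau>) - 1 - c*\<tau>)/c^2) {T - \<tau>..T}"
    by (rule has_integral_eq_rhs[OF has_integral_exp_neg_times_linear
          [where s = "T - \<tau>" and \<alpha> = "T - \<tau>" and \<beta> = T]])
      (use assms in \<open>auto simp: field_simps power2_eq_square exp_diff exp_minus\<close>)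
  then have "((\<lambda>t. exp (-c*t) * max 0 (t + \<tau> - T)) has_integral
           exp (-c*T) * (exp (c*\<tau>) - 1 - c*\<tau>)/c^2) {T - \<tau>..T}"
    by (rule has_integral_eq[rotated]) (simp add: algebra_simps)
  moreover have "((\<lambda>t. exp (-c*t) * max 0 (t + \<tau> - T)) has_integral 0) {0..T - \<tau>}"
    by (rule has_integral_eq[OF _ has_integral_0]) auto
  ultimately show ?thesis
    using has_integral_combine[of 0 "T - \<tau>" T] assms by fastforce
qed

definition window_length :: "real \<Rightarrow> real \<Rightarrow> real \<Rightarrow> real" where
  "window_length T \<tau> t = min T (t + \<tau>) - max 0 (t - \<tau>)"

lemma has_integral_exp_neg_window_length:
  fixes c \<tau> T :: real
  assumes "c \<noteq> 0" "0 \<le> \<tau>" "\<tau> \<le> T"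
  shows "((\<lambda>t. exp (-c*t) * window_length T \<tau> t) has_integral
           (1 + c*\<tau> - exp (-c*\<tau>) + exp (-c*T) * (1 - c*\<tau> - exp (c*\<tau>))) / c^2) {0..T}"
proof -
  have window: "window_length T \<tau> t = 2*\<tau> - max 0 (t + \<tau> - T) - max 0 (\<tau> - t)" for t
    by (simp add: window_length_def min_def max_def)
  have "((\<lambda>t. 2*\<tau> * exp (-c*t) - exp (-c*t) * max 0 (t + \<tau> - T) - exp (-c*t) * max 0 (\<tau> - t))
          has_integral 2*\<tau> * ((1 - exp (-c*T)) / c) - exp (-c*T) * (exp (c*\<tau>) - 1 - c*\<tau>)/c^2
            - (\<tau>/c - (1 - exp (-c*\<tau>))/c^2)) {0..T}"
    using has_integral_exp_neg[of c 0 T] assms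
    by (intro has_integral_diff has_integral_mult_right has_integral_exp_neg_ramp_up
        has_integral_exp_neg_ramp_down) auto
  then show ?thesis
    by (rule has_integral_eq_rhs[OF has_integral_eq[rotated]])
      (use assms in \<open>auto simp: window algebra_simps field_simps power2_eq_square\<close>)
qed

definition detection_density :: "real \<Rightarrow> real \<Rightarrow> real \<Rightarrow> real" where
  "detection_density a b t = 2*a*b / (2*b - a) * (exp (-a*t) - exp (-2*b*t))"

lemma continuous_on_detection_density [continuous_intros]: "continuous_on S (detection_density a b)"
  unfolding detection_density_def by (intro continuous_intros)

lemma detection_density_pos:
  fixes a b t :: real
  assumes "0 < a" "0 < b" "a \<noteq> 2*b" "0 < t"
  shows "0 < detection_density a b t"
proof -
  have "0 < (exp (-a*t) - exp (-2*b*t)) / (2*b - a)"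
    using assms by (cases "a < 2*b") (auto simp: zero_less_divide_iff)
  then have "0 < 2*a*b * ((exp (-a*t) - exp (-2*b*t)) / (2*b - a))"
    using assms by (intro mult_pos_pos) auto
  then show ?thesis
    by (simp add: detection_density_def)
qed

lemma p_em_psi_squared:
  fixes a b t t0 :: real
  assumes "0 \<le> b"
  shows "indicator {0..} t0 * (p_em a t0 * (psi b t0 t)\<^sup>2)
    = indicator {0..t} t0 * (2*a*b * exp (-2*b*t) * exp ((2*b - a)*t0))"
proof -
  have "exp (-a*t0) * (exp (-b*(t - t0)))\<^sup>2 = exp (-2*b*t) * exp ((2*b - a)*t0)"
    by (simp add: power2_eq_square flip: exp_add) (simp add: algebra_simps)
  then show ?thesis
    using assms by (auto simp: indicator_def p_em_def psi_def heaviside_def power_mult_distrib)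
qed

lemma p_dens_eq:
  fixes a b \<eta> t :: real
  assumes "0 \<le> b" "a \<noteq> 2*b"
  shows "p_dens a b \<eta> t = (if 0 \<le> t then \<eta> * detection_density a b t else 0)"
proof (cases "0 \<le> t")
  case True
  define H where "H t0 = 2*a*b * exp (-2*b*t) * exp ((2*b - a)*t0) / (2*b - a)" for t0
  have "(LINT t0:{0..}|lborel. p_em a t0 * (psi b t0 t)\<^sup>2)
      = (\<integral>t0. indicator {0..t} t0 *\<^sub>R (2*a*b * exp (-2*b*t) * exp ((2*b - a)*t0)) \<partial>lborel)"
    unfolding set_lebesgue_integral_def using p_em_psi_squared[OF assms(1)] by simp
  also have "\<dots> = H t - H 0"
    unfolding H_def using True assms(2)
    by (intro integral_FTC_atLeastAtMost)
      (auto intro!: derivative_eq_intros continuous_intros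
        simp: has_real_derivative_iff_has_vector_derivative[symmetric])
  also have "\<dots> = detection_density a b t"
    by (simp add: H_def detection_density_def diff_divide_distrib algebra_simps flip: exp_add)
  finally show ?thesis
    using True by (simp add: p_dens_def)
next
  case False
  then show ?thesis
    by (simp add: p_dens_def set_lebesgue_integral_def p_em_psi_squared[OF assms(1)])
qed

lemma p_det_eq:
  fixes a b \<eta> T :: real
  assumes "0 \<le> b" "a \<noteq> 2*b"
  shows "p_det a b \<eta> T = \<eta> * integral {0..T} (detection_density a b)"
proof -
  have "p_det a b \<eta> T = (LINT t:{0..T}|lborel. \<eta> * detection_density a b t)"
    unfolding p_det_def by (rule set_lebesgue_integral_cong) (auto simp: p_dens_eq[OF assms])
  also have "\<dots> = integral {0..T} (\<lambda>t. \<eta> * detection_density a b t)"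
    by (intro set_borel_integral_eq_integral borel_integrable_atLeastAtMost' continuous_intros)
  finally show ?thesis
    by simp
qed

lemma p_det_pos:
  fixes a b \<eta> T :: real
  assumes "0 < a" "0 < b" "a \<noteq> 2*b" "0 < \<eta>" "0 < T"
  shows "0 < p_det a b \<eta> T"
proof -
  have "integral {0..T} (\<lambda>_. 0) < integral {0..T} (detection_density a b)"
    using integral_less[of 0 T "\<lambda>_. 0" "detection_density a b"] assms detection_density_pos
    by (auto intro: continuous_intros)
  then show ?thesis
    using assms by (simp add: p_det_eq)
qed

lemma has_integral_detection_density_window_length:
  fixes a b \<tau> T :: real
  defines "N \<equiv> \<lambda>c. 1 + c*\<tau> - exp (-c*\<tau>) + exp (-c*T) * (1 - c*\<tau> - exp (c*\<tau>))"
  assumes "a \<noteq> 0" "b \<noteq> 0" "0 \<le> \<tau>" "\<tau> \<le> T"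
  shows "((\<lambda>t. detection_density a b t * window_length T \<tau> t) has_integral
           2*a*b / (2*b - a) * (N a / a^2 - N (2*b) / (2*b)^2)) {0..T}"
proof -
  have "((\<lambda>t. (exp (-a*t) * window_length T \<tau> t - exp (-(2*b)*t) * window_length T \<tau> t)
      * (2*a*b / (2*b - a))) has_integral (N a / a^2 - N (2*b) / (2*b)^2) * (2*a*b / (2*b - a))) {0..T}"
    unfolding N_def using assms
    by (intro has_integral_mult_left has_integral_diff has_integral_exp_neg_window_length) auto
  then show ?thesis
    by (rule has_integral_eq_rhs[OF has_integral_eq[rotated]])
      (simp_all add: detection_density_def left_diff_distrib right_diff_distrib diff_divide_distrib mult_ac)
qed

lemma p_cond_eq:
  fixes a b \<eta> T t :: real
  assumes "0 \<le> b" "a \<noteq> 2*b"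
  shows "p_cond a b \<eta> T t = indicator {0..T} t * \<eta> * detection_density a b t / p_det a b \<eta> T"
  by (simp add: p_cond_def heaviside_def p_dens_eq[OF assms] indicator_def)

lemma d_dens_eq: "d_dens T t = indicator {0..T} t / T"
  by (simp add: d_dens_def heaviside_def indicator_def)

lemma set_integral_band_fst:
  fixes g :: "real \<Rightarrow> real" and T \<tau> :: real
  assumes g: "continuous_on {0..T} g" and "0 \<le> \<tau>"
  shows "(LINT z:{(t1, t2). \<bar>t1 - t2\<bar> \<le> \<tau>} \<inter> {0..T} \<times> {0..T}|(lborel \<Otimes>\<^sub>M lborel). g (fst z))
       = integral {0..T} (\<lambda>t. g t * window_length T \<tau> t)"
proof -
  define K where "K = {(t1, t2). \<bar>t1 - t2\<bar> \<le> \<tau>} \<inter> {0..T} \<times> {0..T :: real}"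
  have "compact K"
    unfolding K_def case_prod_unfold
    by (intro closed_Int_compact compact_Times compact_Icc closed_Collect_le continuous_intros)
  moreover have "continuous_on K (\<lambda>z. g (fst z))"
    by (rule continuous_on_compose2[OF g continuous_on_fst[OF continuous_on_id]]) (auto simp: K_def)
  ultimately have "integrable (lborel \<Otimes>\<^sub>M lborel) (\<lambda>z. indicator K z *\<^sub>R g (fst z))"
    unfolding lborel_prod by (rule borel_integrable_compact)
  then have "(LINT z:K|(lborel \<Otimes>\<^sub>M lborel). g (fst z))
      = (\<integral>t1. (\<integral>t2. indicator K (t1, t2) *\<^sub>R g (fst (t1, t2)) \<partial>lborel) \<partial>lborel)"
    unfolding set_lebesgue_integral_def by (rule lborel_pair.integral_fst'[symmetric])
  also have "\<dots> = (LINT t1:{0..T}|lborel. g t1 * window_length T \<tau> t1)"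
    unfolding set_lebesgue_integral_def
  proof (rule Bochner_Integration.integral_cong[OF refl])
    fix t1 :: real
    have "(\<lambda>t2. indicator K (t1, t2) *\<^sub>R g (fst (t1, t2)))
        = (\<lambda>t2. (indicator {0..T} t1 * g t1) * indicator {max 0 (t1 - \<tau>)..min T (t1 + \<tau>)} t2)"
      by (auto simp: K_def indicator_def abs_le_iff algebra_simps)
    then have "(\<integral>t2. indicator K (t1, t2) *\<^sub>R g (fst (t1, t2)) \<partial>lborel)
        = indicator {0..T} t1 * g t1 * measure lborel {max 0 (t1 - \<tau>)..min T (t1 + \<tau>)}"
      by simp
    also have "\<dots> = indicator {0..T} t1 *\<^sub>R (g t1 * window_length T \<tau> t1)"
      using \<open>0 \<le> \<tau>\<close> by (auto simp: window_length_def indicator_def)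
    finally show "(\<integral>t2. indicator K (t1, t2) *\<^sub>R g (fst (t1, t2)) \<partial>lborel)
        = indicator {0..T} t1 *\<^sub>R (g t1 * window_length T \<tau> t1)" .
  qed
  also have "\<dots> = integral {0..T} (\<lambda>t. g t * window_length T \<tau> t)"
    unfolding window_length_def
    by (intro set_borel_integral_eq_integral borel_integrable_atLeastAtMost' continuous_intros g)
  finally show ?thesis
    unfolding K_def .
qed

theorem theorem8:
  fixes a b \<eta> T \<tau> :: real
  assumes "a > 0" and "b > 0" and "a \<noteq> 2 * b"
    and "0 < \<eta>" and "\<eta> \<le> 1"
    and "T > 0" and "0 < \<tau>" and "\<tau> \<le> T"
  shows "p_phdc a b \<eta> T \<tau> * (p_det a b \<eta> T / \<eta>) =
     a / (2 * b * (a - 2 * b) * T) *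
       (1 + 2 * b * \<tau> - exp (- 2 * b * \<tau>)
          + exp (- 2 * b * T) * (1 - 2 * b * \<tau> - exp (2 * b * \<tau>)))
   - 2 * b / (a * (a - 2 * b) * T) *
       (1 + a * \<tau> - exp (- a * \<tau>)
          + exp (- a * T) * (1 - a * \<tau> - exp (a * \<tau>)))"
proof -
  define P where "P = p_det a b \<eta> T"
  define N where "N c = 1 + c*\<tau> - exp (-c*\<tau>) + exp (-c*T) * (1 - c*\<tau> - exp (c*\<tau>))" for c
  have "0 < P"
    unfolding P_def using assms by (intro p_det_pos)
  have "p_phdc a b \<eta> T \<tau> = (LINT z:{(t1, t2). \<bar>t1 - t2\<bar> \<le> \<tau>} \<inter> {0..T} \<times> {0..T}|(lborel \<Otimes>\<^sub>M lborel).
       \<eta> / (P * T) * detection_density a b (fst z))"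
    unfolding p_phdc_def set_lebesgue_integral_def
    using assms by (intro Bochner_Integration.integral_cong) (auto simp: p_cond_eq d_dens_eq P_def indicator_def)
  also have "\<dots> = \<eta> / (P * T) * integral {0..T} (\<lambda>t. detection_density a b t * window_length T \<tau> t)"
    using set_integral_band_fst[OF continuous_on_detection_density, of \<tau> T a b] assms by simp
  also have "integral {0..T} (\<lambda>t. detection_density a b t * window_length T \<tau> t)
      = 2*a*b / (2*b - a) * (N a / a^2 - N (2*b) / (2*b)^2)"
    unfolding N_def using assms by (intro integral_unique has_integral_detection_density_window_length) auto
  finally have "p_phdc a b \<eta> T \<tau> * (P / \<eta>) = 2*a*b / (-(a - 2*b)) * (N a / a^2 - N (2*b) / (2*b)^2) / T"
    using \<open>0 < P\<close> \<open>0 < \<eta>\<close> by (simp add: mult_ac)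
  also have "\<dots> = a / (2*b * (a - 2*b) * T) * N (2*b) - 2*b / (a * (a - 2*b) * T) * N a"
  proof -
    have partial_fractions: "2*a*b / (-D) * (x / a^2 - y / (2*b)^2) / T
        = a / (2*b * D * T) * y - 2*b / (a * D * T) * x" if "D \<noteq> 0" for D x y
      using that assms by (simp add: field_simps power2_eq_square)
    show ?thesis
      using assms by (intro partial_fractions) auto
  qed
  finally show ?thesis
    by (simp add: P_def N_def)
qed

end
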